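(* Fix a test set $\mathbf{x}=\{x_1,\dots,x_n\}$ of size $n$ and a bounded performance metric $\Psi$. Let $\eta(x_i)=\mathbb{P}(Y=1\mid x_i)$ and let $\hat\eta(x_i)$ be estimates (computed from $m$ training samples) satisfying $\hat\eta(x_i)\xrightarrow{p}\eta(x_i)$ as $m\to\infty$. Let $\hat{\mathbb{P}}(\mathbf{y}\mid\mathbf{x})=\prod_{i=1}^n\hat\eta(x_i)^{y_i}(1-\hat\eta(x_i))^{1-y_i}$ and $\mathbb{P}(\mathbf{y}\mid\mathbf{x})=\prod_{i=1}^n\eta(x_i)^{y_i}(1-\eta(x_i))^{1-y_i}$. Let $\mathbf{s}^*\in\arg\max_{\mathbf{s}\in\{0,1\}^n}U_\Psi(\mathbf{s};\mathbb{P})$ and $\hat{\mathbf{s}}\in\arg\max_{\mathbf{s}\in\{0,1\}^n}U_\Psi(\mathbf{s};\hat{\mathbb{P}})$. Then \[U_\Psi(\mathbf{s}^*;\mathbb{P})-U_\Psi(\hat{\mathbf{s}};\mathbb{P})\xrightarrow{p}0.\]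
   Context: Labels are binary. A metric $\Psi$ is a function of the empirical confusion matrix (entries $\frac1n\sum_is_iy_i$, $\frac1n\sum_i(1-s_i)(1-y_i)$, $\frac1n\sum_is_i(1-y_i)$, $\frac1n\sum_i(1-s_i)y_i$) of predictions $\mathbf{s}\in\{0,1\}^n$ against labels $\mathbf{y}\in\{0,1\}^n$, written $\Psi(\mathbf{s},\mathbf{y})$. For a distribution $Q$ on $\{0,1\}^n$, $U_\Psi(\mathbf{s};Q)=\sum_{\mathbf{y}\in\{0,1\}^n}Q(\mathbf{y})\Psi(\mathbf{s},\mathbf{y})$. *)

theory Defs
  imports "HOL-Probability.Probability"
begin

definition bvecs :: "nat \<Rightarrow> (nat \<Rightarrow> nat) set" where
  "bvecs n = ({0..<n} \<rightarrow>\<^sub>E {0, 1})"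

text \<open>Metric evaluated on the empirical confusion matrix.  The metric Psi takes
  the four entries in the order (TP, TN, FP, FN), each normalised by 1/n.\<close>
definition metric :: "(real \<Rightarrow> real \<Rightarrow> real \<Rightarrow> real \<Rightarrow> real) \<Rightarrow> nat
    \<Rightarrow> (nat \<Rightarrow> nat) \<Rightarrow> (nat \<Rightarrow> nat) \<Rightarrow> real" where
  "metric Psi n s y =
     Psi ((\<Sum>i<n. real (s i) * real (y i)) / real n)
         ((\<Sum>i<n. (1 - real (s i)) * (1 - real (y i))) / real n)
         ((\<Sum>i<n. real (s i) * (1 - real (y i))) / real n)
         ((\<Sum>i<n. (1 - real (s i)) * real (y i)) / real n)"

definition U :: "(real \<Rightarrow> real \<Rightarrow> real \<Rightarrow> real \<Rightarrow> real) \<Rightarrow> nat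
    \<Rightarrow> (nat \<Rightarrow> nat) \<Rightarrow> ((nat \<Rightarrow> nat) \<Rightarrow> real) \<Rightarrow> real" where
  "U Psi n s Q = (\<Sum>y\<in>bvecs n. Q y * metric Psi n s y)"

definition prodP :: "nat \<Rightarrow> (nat \<Rightarrow> real) \<Rightarrow> (nat \<Rightarrow> nat) \<Rightarrow> real" where
  "prodP n p y = (\<Prod>i<n. p i ^ y i * (1 - p i) ^ (1 - y i))"

end

theory Submission
  imports Defs
begin

text \<open>The expected utility \<open>U\<^sub>\<Psi>(s; Q)\<close> is a bounded combination of the \<open>2\<^sup>n\<close> product
  probabilities, each a Lipschitz function of the label probabilities near \<open>[0,1]\<^sup>n\<close>. So if every
  estimate \<open>\<eta>\<^sub>m(x\<^sub>i)\<close> is within \<open>d\<close> of \<open>\<eta>(x\<^sub>i)\<close>, the estimated and true utilities differ by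
  at most \<open>C d\<close> uniformly in \<open>s\<close>, and a maximiser of the estimated utility loses at most
  \<open>2 C d\<close> of true utility. Hence the regret exceeds \<open>\<epsilon>\<close> only on the union of the \<open>n\<close> events
  \<open>|\<eta>\<^sub>m(x\<^sub>i) - \<eta>(x\<^sub>i)| > d\<close>, whose probabilities tend to \<open>0\<close> by consistency.\<close>

lemma abs_prod_diff_le:
  fixes a b :: "nat \<Rightarrow> real"
  assumes "\<And>i. i < n \<Longrightarrow> \<bar>a i\<bar> \<le> 1" "\<And>i. i < n \<Longrightarrow> \<bar>b i - a i\<bar> \<le> d" "d \<le> 1"
  shows "\<bar>(\<Prod>i<n. b i) - (\<Prod>i<n. a i)\<bar> \<le> (2 ^ n - 1) * d"
  using assms(1,2)
proof (induction n)
  case 0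
  then show ?case by simp
next
  case (Suc n)
  let ?B = "\<Prod>i<n. b i" and ?A = "\<Prod>i<n. a i"
  have IH: "\<bar>?B - ?A\<bar> \<le> (2 ^ n - 1) * d" using Suc by simp
  have A: "\<bar>?A\<bar> \<le> 1"
    unfolding abs_prod using Suc.prems(1) by (intro prod_le_1) auto
  have an: "\<bar>a n\<bar> \<le> 1" "\<bar>b n - a n\<bar> \<le> d" using Suc.prems by auto
  \<comment> \<open>The perturbed factors need not be bounded by 1; \<open>d \<le> 1\<close> bounds them by 2.\<close>
  have bn: "\<bar>b n\<bar> \<le> 2" using an assms(3) by linarith
  have "\<bar>b n * ?B - a n * ?A\<bar> = \<bar>b n * (?B - ?A) + (b n - a n) * ?A\<bar>"
    by (simp add: algebra_simps)
  also have "\<dots> \<le> \<bar>b n\<bar> * \<bar>?B - ?A\<bar> + \<bar>b n - a n\<bar> * \<bar>?A\<bar>"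
    by (metis abs_mult abs_triangle_ineq)
  also have "\<dots> \<le> 2 * ((2 ^ n - 1) * d) + d * 1"
    using IH an bn A by (intro add_mono mult_mono) auto
  also have "\<dots> = (2 ^ Suc n - 1) * d" by (simp add: algebra_simps)
  finally show ?case by (simp add: mult.commute)
qed

lemma abs_prodP_diff_le:
  assumes "y \<in> bvecs n"
    and "\<And>i. i < n \<Longrightarrow> 0 \<le> q i \<and> q i \<le> 1"
    and "\<And>i. i < n \<Longrightarrow> \<bar>p i - q i\<bar> \<le> d" "d \<le> 1"
  shows "\<bar>prodP n p y - prodP n q y\<bar> \<le> (2 ^ n - 1) * d"
  unfolding prodP_def
proof (rule abs_prod_diff_le)
  fix i assume i: "i < n"
  then have "y i = 0 \<or> y i = 1" using assms(1) unfolding bvecs_def by auto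
  then show "\<bar>q i ^ y i * (1 - q i) ^ (1 - y i)\<bar> \<le> 1"
    and "\<bar>p i ^ y i * (1 - p i) ^ (1 - y i) - q i ^ y i * (1 - q i) ^ (1 - y i)\<bar> \<le> d"
    using assms(2,3)[OF i] by auto
qed (fact assms(4))

lemma card_bvecs: "card (bvecs n) = 2 ^ n"
  by (simp add: bvecs_def card_PiE flip: numeral_2_eq_2)

lemma abs_U_diff_le:
  assumes "\<And>y. y \<in> bvecs n \<Longrightarrow> \<bar>Q1 y - Q2 y\<bar> \<le> c" and "\<And>a b c d. \<bar>Psi a b c d\<bar> \<le> B"
  shows "\<bar>U Psi n s Q1 - U Psi n s Q2\<bar> \<le> 2 ^ n * (c * B)"
proof -
  have "U Psi n s Q1 - U Psi n s Q2 = (\<Sum>y\<in>bvecs n. (Q1 y - Q2 y) * metric Psi n s y)"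
    unfolding U_def by (simp add: sum_subtractf left_diff_distrib)
  then have "\<bar>U Psi n s Q1 - U Psi n s Q2\<bar> = \<bar>\<Sum>y\<in>bvecs n. (Q1 y - Q2 y) * metric Psi n s y\<bar>"
    by simp
  also have "\<dots> \<le> (\<Sum>y\<in>bvecs n. \<bar>Q1 y - Q2 y\<bar> * \<bar>metric Psi n s y\<bar>)"
    unfolding abs_mult[symmetric] by (rule sum_abs)
  also have "\<dots> \<le> (\<Sum>y\<in>bvecs n. c * B)"
  proof (rule sum_mono)
    fix y assume "y \<in> bvecs n"
    then have "\<bar>Q1 y - Q2 y\<bar> \<le> c" by (rule assms(1))
    moreover have "\<bar>metric Psi n s y\<bar> \<le> B" unfolding metric_def by (rule assms(2))
    ultimately show "\<bar>Q1 y - Q2 y\<bar> * \<bar>metric Psi n s y\<bar> \<le> c * B"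
      by (intro mult_mono) auto
  qed
  finally show ?thesis by (simp add: card_bvecs)
qed

lemma abs_U_prodP_diff_le:
  assumes "\<And>a b c d. \<bar>Psi a b c d\<bar> \<le> B"
    and "\<And>i. i < n \<Longrightarrow> 0 \<le> q i \<and> q i \<le> 1"
    and "\<And>i. i < n \<Longrightarrow> \<bar>p i - q i\<bar> \<le> d" "0 \<le> d" "d \<le> 1"
  shows "\<bar>U Psi n s (prodP n p) - U Psi n s (prodP n q)\<bar> \<le> 4 ^ n * B * d"
proof -
  have B: "0 \<le> B" using assms(1)[of 0 0 0 0] by linarith
  have "\<bar>U Psi n s (prodP n p) - U Psi n s (prodP n q)\<bar> \<le> 2 ^ n * ((2 ^ n - 1) * d * B)"
    using assms by (intro abs_U_diff_le abs_prodP_diff_le) auto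
  also have "\<dots> \<le> 2 ^ n * (2 ^ n * d * B)"
    using B assms(4) by (intro mult_left_mono mult_right_mono) auto
  also have "\<dots> = 4 ^ n * B * d"
    by (simp add: power_mult_distrib[symmetric])
  finally show ?thesis .
qed

lemma regret_of_approximate_maximizer_le:
  fixes f g :: "'s \<Rightarrow> real"
  assumes "\<And>s. s \<in> S \<Longrightarrow> \<bar>f s - g s\<bar> \<le> \<delta>"
    and "s\<^sub>f \<in> S" "t \<in> S" "\<And>s. s \<in> S \<Longrightarrow> g s \<le> g t"
  shows "f s\<^sub>f - f t \<le> 2 * \<delta>"
  using assms(1)[OF assms(2)] assms(1)[OF assms(3)] assms(4)[OF assms(2)] by linarith

lemma U_regret_le_of_estimates_close:
  assumes "\<And>a b c d. \<bar>Psi a b c d\<bar> \<le> B"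
    and "\<And>i. i < n \<Longrightarrow> 0 \<le> q i \<and> q i \<le> 1"
    and "\<And>i. i < n \<Longrightarrow> \<bar>p i - q i\<bar> \<le> d" "0 \<le> d" "d \<le> 1"
    and "s \<in> bvecs n" "t \<in> bvecs n"
    and "\<And>s. s \<in> bvecs n \<Longrightarrow> U Psi n s (prodP n p) \<le> U Psi n t (prodP n p)"
  shows "U Psi n s (prodP n q) - U Psi n t (prodP n q) \<le> 2 * (4 ^ n * B * d)"
proof (rule regret_of_approximate_maximizer_le[where S = "bvecs n"
    and f = "\<lambda>s. U Psi n s (prodP n q)" and g = "\<lambda>s. U Psi n s (prodP n p)"])
  fix s
  show "\<bar>U Psi n s (prodP n q) - U Psi n s (prodP n p)\<bar> \<le> 4 ^ n * B * d"
    using abs_U_prodP_diff_le[OF assms(1-5)] by (simp add: abs_minus_commute)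
qed (use assms(6-8) in auto)

lemma ex_pos_le_one_mult_less:
  fixes C \<epsilon> :: real
  assumes "0 \<le> C" "0 < \<epsilon>"
  shows "\<exists>d>0. d \<le> 1 \<and> 2 * C * d < \<epsilon>"
proof (intro exI conjI)
  let ?d = "min 1 (\<epsilon> / (2 * C + 1))"
  show "0 < ?d" "?d \<le> 1" using assms by simp_all
  have "2 * C * ?d \<le> 2 * C * (\<epsilon> / (2 * C + 1))"
    using assms by (intro mult_left_mono) simp_all
  also have "\<dots> < \<epsilon>" using assms by (simp add: field_simps)
  finally show "2 * C * ?d < \<epsilon>" .
qed

lemma (in prob_space) prob_tendsto_zero_if_subset_finite_Union:
  assumes "finite I" "\<And>m i. i \<in> I \<Longrightarrow> F m i \<in> events"
    and "\<And>i. i \<in> I \<Longrightarrow> (\<lambda>m. prob (F m i)) \<longlonglongrightarrow> 0"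
    and "\<And>m. E m \<subseteq> (\<Union>i\<in>I. F m i)"
  shows "(\<lambda>m. prob (E m)) \<longlonglongrightarrow> 0"
proof (rule tendsto_sandwich[OF _ _ tendsto_const tendsto_null_sum])
  show "\<forall>\<^sub>F m in sequentially. prob (E m) \<le> (\<Sum>i\<in>I. prob (F m i))"
  proof (intro always_eventually allI)
    fix m
    \<comment> \<open>\<open>E m\<close> need not be an event, but then its probability is \<open>0\<close> by convention.\<close>
    have "prob (E m) \<le> prob (\<Union>i\<in>I. F m i)"
    proof (cases "E m \<in> events")
      case True
      then show ?thesis using assms(1,2,4) by (intro finite_measure_mono sets.finite_UN) auto
    qed (simp add: measure_notin_sets)
    also have "\<dots> \<le> (\<Sum>i\<in>I. prob (F m i))"
      using assms(1,2) by (intro finite_measure_subadditive_finite) auto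
    finally show "prob (E m) \<le> (\<Sum>i\<in>I. prob (F m i))" .
  qed
qed (use assms(3) in auto)

theorem theorem2:
  fixes M :: "'a measure"
    and n :: nat
    and Psi :: "real \<Rightarrow> real \<Rightarrow> real \<Rightarrow> real \<Rightarrow> real"
    and eta :: "nat \<Rightarrow> real"
    and eta_hat :: "nat \<Rightarrow> nat \<Rightarrow> 'a \<Rightarrow> real"
    and s_star :: "nat \<Rightarrow> nat"
    and s_hat :: "nat \<Rightarrow> 'a \<Rightarrow> (nat \<Rightarrow> nat)"
  assumes "prob_space M"
    and bounded: "\<exists>B. \<forall>a b c d. \<bar>Psi a b c d\<bar> \<le> B"
    and eta_prob: "\<forall>i<n. 0 \<le> eta i \<and> eta i \<le> 1"
    and eta_hat_meas: "\<forall>m i. i < n \<longrightarrow> eta_hat m i \<in> borel_measurable M"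
    and consistent: "\<forall>i<n. \<forall>\<epsilon>>0.
        (\<lambda>m. measure M {\<omega> \<in> space M. \<bar>eta_hat m i \<omega> - eta i\<bar> > \<epsilon>}) \<longlonglongrightarrow> 0"
    and s_star_opt: "s_star \<in> bvecs n \<and>
        (\<forall>s\<in>bvecs n. U Psi n s (prodP n eta) \<le> U Psi n s_star (prodP n eta))"
    and s_hat_opt: "\<forall>m. \<forall>\<omega>\<in>space M. s_hat m \<omega> \<in> bvecs n \<and>
        (\<forall>s\<in>bvecs n. U Psi n s (prodP n (\<lambda>i. eta_hat m i \<omega>))
                       \<le> U Psi n (s_hat m \<omega>) (prodP n (\<lambda>i. eta_hat m i \<omega>)))"
    and s_hat_meas: "\<forall>m. s_hat m \<in> measurable M (count_space UNIV)"
  shows "\<forall>\<epsilon>>0. (\<lambda>m. measure M {\<omega> \<in> space M.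
            \<bar>U Psi n s_star (prodP n eta) - U Psi n (s_hat m \<omega>) (prodP n eta)\<bar> > \<epsilon>})
           \<longlonglongrightarrow> 0"
proof (intro allI impI)
  fix \<epsilon> :: real assume "\<epsilon> > 0"
  interpret prob_space M by fact
  obtain B where B: "\<And>a b c d. \<bar>Psi a b c d\<bar> \<le> B" using bounded by auto
  have "0 \<le> B" using B[of 0 0 0 0] by linarith
  then have "0 \<le> 4 ^ n * B" by simp
  then obtain d where d: "0 < d" "d \<le> 1" "2 * (4 ^ n * B) * d < \<epsilon>"
    using ex_pos_le_one_mult_less \<open>\<epsilon> > 0\<close> by blast
  define F where "F m i = {\<omega> \<in> space M. \<bar>eta_hat m i \<omega> - eta i\<bar> > d}" for m i
  have regret_le: "U Psi n s_star (prodP n eta) - U Psi n (s_hat m \<omega>) (prodP n eta) \<le> 2 * (4 ^ n * B * d)"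
    if "\<omega> \<in> space M" "\<omega> \<notin> (\<Union>i\<in>{..<n}. F m i)" for m \<omega>
    using B eta_prob d s_star_opt s_hat_opt that
    by (intro U_regret_le_of_estimates_close[where p = "\<lambda>i. eta_hat m i \<omega>"])
      (auto simp: F_def not_less)
  have regret_nonneg: "U Psi n (s_hat m \<omega>) (prodP n eta) \<le> U Psi n s_star (prodP n eta)"
    if "\<omega> \<in> space M" for m \<omega>
    using s_star_opt s_hat_opt that by auto
  show "(\<lambda>m. prob {\<omega> \<in> space M.
          \<bar>U Psi n s_star (prodP n eta) - U Psi n (s_hat m \<omega>) (prodP n eta)\<bar> > \<epsilon>}) \<longlonglongrightarrow> 0"
  proof (rule prob_tendsto_zero_if_subset_finite_Union[where I = "{..<n}" and F = F])
    show "F m i \<in> events" if "i \<in> {..<n}" for m i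
    proof -
      have [measurable]: "eta_hat m i \<in> borel_measurable M" using eta_hat_meas that by auto
      show ?thesis unfolding F_def by measurable
    qed
    show "(\<lambda>m. prob (F m i)) \<longlonglongrightarrow> 0" if "i \<in> {..<n}" for i
      using consistent that d(1) unfolding F_def by auto
  qed (use regret_le regret_nonneg d(3) in force)+
qed

end
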